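(* Let $I=[0,1]$ and $f_{1,\infty}$ a sequence of continuous self-maps of $I$. If $(I,f_{1,\infty})$ is weakly mixing of order $3$, then $(\mathcal{M}(I),\widetilde{f}_{1,\infty})$ is weakly mixing of all orders.
   Context: For $f_{1,\infty}=\{f_n\}_{n\ge1}$ write $f_1^n=f_n\circ\cdots\circ f_1$. $\mathcal{M}(I)$ is the space of Borel probability measures on $I$ with the weak$^*$ topology, and $\widetilde{f}_1^n(\mu)(A)=\mu((f_1^n)^{-1}(A))$ for Borel $A$. A non-autonomous system $(Y,g_{1,\infty})$ is weakly mixing of order $m$ ($m\ge2$) if for any non-empty open sets $U_1,\dots,U_m,V_1,\dots,V_m\subseteq Y$ there is $n\in\mathbb{N}$ with $g_1^n(U_i)\cap V_i\neq\emptyset$ for all $1\le i\le m$; weakly mixing of all orders means weakly mixing of order $m$ for every $m\ge2$. *)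

theory Defs
  imports "HOL-Probability.Probability"
begin

text \<open>Composition f_1^n = f_n o ... o f_1 (with f_1^0 = id); the sequence is f 1, f 2, ...\<close>
fun iter_comp :: "(nat \<Rightarrow> 'a \<Rightarrow> 'a) \<Rightarrow> nat \<Rightarrow> 'a \<Rightarrow> 'a" where
  "iter_comp f 0 = id"
| "iter_comp f (Suc n) = f (Suc n) \<circ> iter_comp f n"

text \<open>Weak mixing of order m for a non-autonomous system on topology X, given by g_1^n = G n.\<close>
definition weakly_mixing_order :: "'a topology \<Rightarrow> (nat \<Rightarrow> 'a \<Rightarrow> 'a) \<Rightarrow> nat \<Rightarrow> bool" where
  "weakly_mixing_order X G m \<longleftrightarrow>
     (\<forall>U V :: nat \<Rightarrow> 'a set.
        (\<forall>i<m. openin X (U i) \<and> U i \<noteq> {} \<and> openin X (V i) \<and> V i \<noteq> {}) \<longrightarrow>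
        (\<exists>n\<ge>1. \<forall>i<m. G n ` (U i) \<inter> V i \<noteq> {}))"

definition weakly_mixing_all_orders :: "'a topology \<Rightarrow> (nat \<Rightarrow> 'a \<Rightarrow> 'a) \<Rightarrow> bool" where
  "weakly_mixing_all_orders X G \<longleftrightarrow> (\<forall>m\<ge>2. weakly_mixing_order X G m)"

definition borel_I :: "real measure" where
  "borel_I = restrict_space borel {0..1}"

definition prob_measures_I :: "real measure set" where
  "prob_measures_I = {\<mu>. prob_space \<mu> \<and> sets \<mu> = sets borel_I}"

definition weak_star_topology_I :: "real measure topology" where
  "weak_star_topology_I = topology_generated_by
     {{\<mu> \<in> prob_measures_I. (\<integral>x. \<phi> x \<partial>\<mu>) \<in> W} | (\<phi> :: real \<Rightarrow> real) (W :: real set).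
        continuous_on {0..1} \<phi> \<and> open W}"

definition induced_map :: "(real \<Rightarrow> real) \<Rightarrow> real measure \<Rightarrow> real measure" where
  "induced_map h \<mu> = distr \<mu> borel_I h"

end

theory Submission
  imports Defs
begin

text \<open>
  Weak mixing of order 3 on \<open>[0,1]\<close> makes the iterates \<open>g\<^sub>n\<close> stretch: every nonempty open set
  is eventually mapped over \<open>[\<epsilon>, 1 - \<epsilon>]\<close>, and by repeatedly shrinking an open set one finds a
  single time \<open>n\<close> at which finitely many given open sets all cover \<open>[\<epsilon>, 1 - \<epsilon>]\<close>. Applied to
  the small intervals around a fine grid, this gives for every \<open>\<delta> > 0\<close> a time \<open>n\<close> and a Borel map
  \<open>H\<close> on \<open>I \<times> I\<close>, constant on grid cells, with \<open>|H(x,y) - x| < \<delta>\<close> and \<open>|g\<^sub>n(H(x,y)) - y| < \<delta>\<close>.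
  For measures \<open>\<mu> \<in> U\<close> and \<open>\<nu> \<in> V\<close>, the image of \<open>\<mu> \<otimes> \<nu>\<close> under \<open>H\<close> is then weak* close to
  \<open>\<mu>\<close>, and its image under \<open>g\<^sub>n\<close> is weak* close to \<open>\<nu>\<close>: weak* neighbourhoods are controlled by
  finitely many test functions, and these are uniformly continuous on \<open>I\<close>.
\<close>

definition weak_star_ball :: "(real \<Rightarrow> real) set \<Rightarrow> real \<Rightarrow> real measure \<Rightarrow> real measure set" where
  "weak_star_ball \<Phi> r \<mu> =
     {\<nu> \<in> prob_measures_I. \<forall>\<phi>\<in>\<Phi>. \<bar>(\<integral>x. \<phi> x \<partial>\<nu>) - (\<integral>x. \<phi> x \<partial>\<mu>)\<bar> < r}"

definition contains_weak_star_ball :: "real measure set \<Rightarrow> real measure \<Rightarrow> bool" where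
  "contains_weak_star_ball Q \<mu> \<longleftrightarrow>
     (\<exists>\<Phi> r. finite \<Phi> \<and> (\<forall>\<phi>\<in>\<Phi>. continuous_on {0..1} \<phi>) \<and> 0 < r \<and> weak_star_ball \<Phi> r \<mu> \<subseteq> Q)"

lemma weak_star_ball_antimono:
  "\<Phi> \<subseteq> \<Phi>' \<Longrightarrow> r' \<le> r \<Longrightarrow> weak_star_ball \<Phi>' r' \<mu> \<subseteq> weak_star_ball \<Phi> r \<mu>"
  unfolding weak_star_ball_def by fastforce

lemma contains_weak_star_ball_mono:
  "contains_weak_star_ball Q \<mu> \<Longrightarrow> Q \<subseteq> Q' \<Longrightarrow> contains_weak_star_ball Q' \<mu>"
  unfolding contains_weak_star_ball_def by blast

lemma common_weak_star_ball:
  assumes "finite K" "\<forall>k\<in>K. contains_weak_star_ball (Q k) (\<mu> k)"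
  shows "\<exists>\<Phi> r. finite \<Phi> \<and> (\<forall>\<phi>\<in>\<Phi>. continuous_on {0..1} \<phi>) \<and> 0 < r \<and>
           (\<forall>k\<in>K. weak_star_ball \<Phi> r (\<mu> k) \<subseteq> Q k)"
  using assms
proof (induction K rule: finite_induct)
  case empty
  show ?case by (intro exI[of _ "{}"] exI[of _ 1]) simp
next
  case (insert k K)
  have "\<forall>j\<in>K. contains_weak_star_ball (Q j) (\<mu> j)" "contains_weak_star_ball (Q k) (\<mu> k)"
    using insert.prems by simp_all
  obtain \<Phi> r where \<Phi>: "finite \<Phi>" "\<forall>\<phi>\<in>\<Phi>. continuous_on {0..1} \<phi>" "0 < r"
    "\<forall>j\<in>K. weak_star_ball \<Phi> r (\<mu> j) \<subseteq> Q j"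
    using insert.IH[OF \<open>\<forall>j\<in>K. _\<close>] by blast
  obtain \<Psi> s where \<Psi>: "finite \<Psi>" "\<forall>\<phi>\<in>\<Psi>. continuous_on {0..1} \<phi>" "0 < s"
    "weak_star_ball \<Psi> s (\<mu> k) \<subseteq> Q k"
    using \<open>contains_weak_star_ball (Q k) (\<mu> k)\<close> unfolding contains_weak_star_ball_def by blast
  have "weak_star_ball (\<Phi> \<union> \<Psi>) (min r s) (\<mu> j) \<subseteq> Q j" if "j \<in> insert k K" for j
  proof -
    have small: "weak_star_ball (\<Phi> \<union> \<Psi>) (min r s) (\<mu> j) \<subseteq> weak_star_ball \<Phi> r (\<mu> j)"
      "weak_star_ball (\<Phi> \<union> \<Psi>) (min r s) (\<mu> j) \<subseteq> weak_star_ball \<Psi> s (\<mu> j)"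
      by (simp_all add: weak_star_ball_antimono)
    show ?thesis
    proof (cases "j = k")
      case True
      with small(2) \<Psi>(4) show ?thesis by blast
    next
      case False
      with that small(1) \<Phi>(4) show ?thesis by blast
    qed
  qed
  moreover have "finite (\<Phi> \<union> \<Psi>)" "\<forall>\<phi>\<in>\<Phi> \<union> \<Psi>. continuous_on {0..1} \<phi>" "0 < min r s"
    using \<Phi> \<Psi> by auto
  ultimately show ?case by blast
qed

lemma weak_star_open_contains_ball:
  assumes "openin weak_star_topology_I Q" "\<mu> \<in> Q"
  shows "\<mu> \<in> prob_measures_I" "contains_weak_star_ball Q \<mu>"
proof -
  have "Q \<subseteq> prob_measures_I \<and> (\<forall>\<mu>\<in>Q. contains_weak_star_ball Q \<mu>)"
    using openin_topology_generated_by[OF assms(1)[unfolded weak_star_topology_I_def]]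
  proof (induction rule: generate_topology_on.induct)
    case Empty
    then show ?case by simp
  next
    case (Int a b)
    have "contains_weak_star_ball (a \<inter> b) \<mu>" if \<mu>: "\<mu> \<in> a \<inter> b" for \<mu>
    proof -
      have "\<exists>\<Phi> r. finite \<Phi> \<and> (\<forall>\<phi>\<in>\<Phi>. continuous_on {0..1} \<phi>) \<and> 0 < r \<and>
              (\<forall>k\<in>{a, b}. weak_star_ball \<Phi> r \<mu> \<subseteq> id k)"
        by (rule common_weak_star_ball) (use Int.IH \<mu> in auto)
      then show ?thesis unfolding contains_weak_star_ball_def by auto
    qed
    with Int.IH show ?case by blast
  next
    case (UN K)
    then show ?case by (blast intro: contains_weak_star_ball_mono)
  next
    case (Basis B)
    then obtain \<phi> :: "real \<Rightarrow> real" and W :: "real set" where B: "B = {\<nu> \<in> prob_measures_I. (\<integral>x. \<phi> x \<partial>\<nu>) \<in> W}"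
      and \<phi>: "continuous_on {0..1} \<phi>" and W: "open W" by blast
    have "contains_weak_star_ball B \<mu>" if \<mu>: "\<mu> \<in> B" for \<mu>
    proof -
      have "(\<integral>x. \<phi> x \<partial>\<mu>) \<in> W" using \<mu> B by blast
      then obtain r where r: "0 < r" "ball (\<integral>x. \<phi> x \<partial>\<mu>) r \<subseteq> W"
        using W open_contains_ball by blast
      have "weak_star_ball {\<phi>} r \<mu> \<subseteq> B"
      proof
        fix \<nu> assume "\<nu> \<in> weak_star_ball {\<phi>} r \<mu>"
        then have "\<nu> \<in> prob_measures_I" "(\<integral>x. \<phi> x \<partial>\<nu>) \<in> ball (\<integral>x. \<phi> x \<partial>\<mu>) r"
          unfolding weak_star_ball_def by (simp_all add: dist_real_def abs_minus_commute)
        with r(2) show "\<nu> \<in> B" unfolding B by blast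
      qed
      with r(1) \<phi> show ?thesis unfolding contains_weak_star_ball_def by blast
    qed
    with B show ?case by blast
  qed
  with assms(2) show "\<mu> \<in> prob_measures_I" "contains_weak_star_ball Q \<mu>" by blast+
qed

lemma weak_star_open_family_common_ball:
  assumes "finite K" "\<forall>k\<in>K. openin weak_star_topology_I (Q k) \<and> Q k \<noteq> {}"
  obtains \<mu> \<Phi> r where "\<forall>k\<in>K. \<mu> k \<in> prob_measures_I" "finite \<Phi>" "\<forall>\<phi>\<in>\<Phi>. continuous_on {0..1} \<phi>" "0 < r"
    "\<forall>k\<in>K. weak_star_ball \<Phi> r (\<mu> k) \<subseteq> Q k"
proof -
  have "\<forall>k\<in>K. \<exists>\<mu>. \<mu> \<in> Q k" using assms(2) by blast
  then obtain \<mu> where "\<forall>k\<in>K. \<mu> k \<in> Q k" by (metis bchoice)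
  then have "\<forall>k\<in>K. \<mu> k \<in> prob_measures_I \<and> contains_weak_star_ball (Q k) (\<mu> k)"
    using assms(2) weak_star_open_contains_ball by blast
  with common_weak_star_ball[OF assms(1), of Q \<mu>] that show thesis by blast
qed

lemma iter_comp_image_subset:
  assumes "\<And>n. f n ` S \<subseteq> S"
  shows "iter_comp f n ` S \<subseteq> S"
  by (induction n) (use assms in \<open>auto simp: image_subset_iff\<close>)

lemma iter_comp_continuous_on:
  assumes "\<And>n. continuous_on S (f n)" "\<And>n. f n ` S \<subseteq> S"
  shows "continuous_on S (iter_comp f n)"
proof (induction n)
  case (Suc n)
  have "continuous_on S (f (Suc n) \<circ> iter_comp f n)"
    by (rule continuous_on_compose[OF Suc continuous_on_subset[OF assms(1)]])
      (rule iter_comp_image_subset[OF assms(2)])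
  then show ?case by simp
qed (simp add: continuous_on_id)

lemma iter_comp_image_mono:
  assumes "iter_comp f k ` W \<subseteq> iter_comp f k ` U" "k \<le> n"
  shows "iter_comp f n ` W \<subseteq> iter_comp f n ` U"
  using assms(2)
proof (induction n rule: dec_induct)
  case (step m)
  then show ?case by (auto simp: image_comp[symmetric] intro: image_mono)
qed (fact assms(1))

lemma uniformly_continuous_on_finite_family:
  fixes \<Phi> :: "('a::metric_space \<Rightarrow> 'b::metric_space) set"
  assumes "compact S" "finite \<Phi>" "\<forall>\<phi>\<in>\<Phi>. continuous_on S \<phi>" "0 < e"
  shows "\<exists>\<delta>>0. \<forall>\<phi>\<in>\<Phi>. \<forall>x\<in>S. \<forall>y\<in>S. dist x y < \<delta> \<longrightarrow> dist (\<phi> x) (\<phi> y) < e"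
  using assms(2,3)
proof (induction \<Phi> rule: finite_induct)
  case empty
  show ?case by (intro exI[of _ 1]) simp
next
  case (insert \<phi> \<Phi>)
  then obtain \<delta>1 where \<delta>1: "0 < \<delta>1"
    "\<forall>\<psi>\<in>\<Phi>. \<forall>x\<in>S. \<forall>y\<in>S. dist x y < \<delta>1 \<longrightarrow> dist (\<psi> x) (\<psi> y) < e"
    by auto
  have "uniformly_continuous_on S \<phi>"
    using insert.prems assms(1) by (intro compact_uniformly_continuous) auto
  then obtain \<delta>2 where \<delta>2: "0 < \<delta>2" "\<forall>x\<in>S. \<forall>y\<in>S. dist y x < \<delta>2 \<longrightarrow> dist (\<phi> y) (\<phi> x) < e"
    unfolding uniformly_continuous_on_def using assms(4) by blast
  show ?case
    using \<delta>1 \<delta>2 by (intro exI[of _ "min \<delta>1 \<delta>2"]) (auto simp: dist_commute)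
qed

lemma Icc_subset_image_connected:
  fixes g :: "'a::topological_space \<Rightarrow> real"
  assumes "connected S" "continuous_on S g" "a \<in> S" "b \<in> S" "g a \<le> s" "t \<le> g b"
  shows "{s..t} \<subseteq> g ` S"
  using connectedD_interval[OF connected_continuous_image[OF assms(2,1)]] assms(3-6) by fastforce

lemma weakly_mixing_order_3D:
  assumes "weakly_mixing_order X G 3"
    and "openin X U0" "U0 \<noteq> {}" "openin X U1" "U1 \<noteq> {}" "openin X U2" "U2 \<noteq> {}"
    and "openin X V0" "V0 \<noteq> {}" "openin X V1" "V1 \<noteq> {}" "openin X V2" "V2 \<noteq> {}"
  obtains n where "n \<ge> 1" "G n ` U0 \<inter> V0 \<noteq> {}" "G n ` U1 \<inter> V1 \<noteq> {}" "G n ` U2 \<inter> V2 \<noteq> {}"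
proof -
  have "\<forall>i<3. openin X ([U0, U1, U2] ! i) \<and> [U0, U1, U2] ! i \<noteq> {} \<and>
              openin X ([V0, V1, V2] ! i) \<and> [V0, V1, V2] ! i \<noteq> {}"
    using assms(2-) by (auto simp: less_Suc_eq numeral_3_eq_3)
  with assms(1) obtain n where "n \<ge> 1" "\<forall>i<3. G n ` ([U0, U1, U2] ! i) \<inter> [V0, V1, V2] ! i \<noteq> {}"
    unfolding weakly_mixing_order_def by blast
  then show thesis
    by (intro that[of n]) (auto simp: less_Suc_eq numeral_3_eq_3 dest: spec[of _ 0] spec[of _ 1] spec[of _ 2])
qed

lemma space_borel_I: "space borel_I = {0..1}"
  by (simp add: borel_I_def space_restrict_space)

lemma floor_scaled_measurable_I: "(\<lambda>x. \<lfloor>c * x\<rfloor>) \<in> borel_I \<rightarrow>\<^sub>M count_space UNIV"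
  unfolding borel_I_def by (rule measurable_restrict_space1) measurable

lemma borel_measurable_floor_pair:
  fixes S :: "int \<Rightarrow> int \<Rightarrow> real"
  shows "(\<lambda>z. S \<lfloor>c * fst z\<rfloor> \<lfloor>c * snd z\<rfloor>) \<in> borel_measurable (borel_I \<Otimes>\<^sub>M borel_I)"
proof -
  have fst: "(\<lambda>z. \<lfloor>c * fst z\<rfloor>) \<in> borel_I \<Otimes>\<^sub>M borel_I \<rightarrow>\<^sub>M count_space UNIV"
    by (rule measurable_compose[OF measurable_fst floor_scaled_measurable_I])
  have snd: "(\<lambda>z. \<lfloor>c * snd z\<rfloor>) \<in> borel_I \<Otimes>\<^sub>M borel_I \<rightarrow>\<^sub>M count_space UNIV"
    by (rule measurable_compose[OF measurable_snd floor_scaled_measurable_I])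
  show ?thesis
    by (rule measurable_compose_countable[OF measurable_compose_countable[OF _ snd] fst]) simp
qed

lemma floor_scaled_bounds:
  fixes K :: nat and x :: real
  assumes "0 < K" "x \<in> {0..1}"
  shows "\<lfloor>K * x\<rfloor> \<in> {0..int K}" "of_int \<lfloor>K * x\<rfloor> / K \<le> x" "x < of_int \<lfloor>K * x\<rfloor> / K + 1 / K"
proof -
  have "real K * x \<le> real K" using assms by (simp add: mult_left_le)
  then have "\<lfloor>K * x\<rfloor> \<le> \<lfloor>real K\<rfloor>" by (rule floor_mono)
  with assms show "\<lfloor>K * x\<rfloor> \<in> {0..int K}" by simp
  show "of_int \<lfloor>K * x\<rfloor> / K \<le> x" "x < of_int \<lfloor>K * x\<rfloor> / K + 1 / K"
    using assms(1) of_int_floor_le[of "K * x"] real_of_int_floor_add_one_gt[of "K * x"]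
    by (simp_all add: field_simps)
qed

lemma approximate_section_on_grid:
  fixes g :: "real \<Rightarrow> real" and K :: nat
  assumes K: "2 \<le> K"
    and cover: "\<And>i. i \<in> {0..int K} \<Longrightarrow> {1/K..1-1/K} \<subseteq> g ` ({0..1} \<inter> ball (of_int i / K) (1/K))"
  obtains H where "H \<in> borel_I \<Otimes>\<^sub>M borel_I \<rightarrow>\<^sub>M borel_I"
    and "\<And>x y. x \<in> {0..1} \<Longrightarrow> y \<in> {0..1} \<Longrightarrow> \<bar>H (x, y) - x\<bar> < 2/K"
    and "\<And>x y. x \<in> {0..1} \<Longrightarrow> y \<in> {0..1} \<Longrightarrow> \<bar>g (H (x, y)) - y\<bar> < 2/K"
proof -
  define \<epsilon> :: real where "\<epsilon> = 1/K"
  have \<epsilon>: "0 < \<epsilon>" "\<epsilon> \<le> 1 - \<epsilon>" using K by (auto simp: \<epsilon>_def field_simps)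
  \<comment> \<open>\<open>H\<close> only depends on the grid cells of \<open>x\<close> and \<open>y\<close>; this makes it Borel without any
    measurable selection theorem.\<close>
  define q where "q j = max \<epsilon> (min (1 - \<epsilon>) (of_int j / K))" for j :: int
  define S where "S i j = (SOME z. z \<in> {0..1} \<inter> ball (of_int i / K) \<epsilon> \<and> g z = q j)" for i j :: int
  define H where "H z = S \<lfloor>K * fst z\<rfloor> \<lfloor>K * snd z\<rfloor>" for z :: "real \<times> real"
  have S: "S i j \<in> {0..1} \<inter> ball (of_int i / K) \<epsilon> \<and> g (S i j) = q j" if "i \<in> {0..int K}" for i j
  proof -
    have "q j \<in> {\<epsilon>..1-\<epsilon>}" using \<epsilon> by (auto simp: q_def)
    then have "q j \<in> g ` ({0..1} \<inter> ball (of_int i / K) \<epsilon>)" using cover[OF that] by (auto simp: \<epsilon>_def)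
    then show ?thesis unfolding S_def by (rule someI2_bex[OF imageE]) auto
  qed
  have H_near: "\<bar>H (x, y) - x\<bar> < 2/K" and H_in: "H (x, y) \<in> {0..1}"
    and gH: "g (H (x, y)) = q \<lfloor>K * y\<rfloor>" if "x \<in> {0..1}" for x y :: real
  proof -
    have "0 < K" using K by simp
    note x = floor_scaled_bounds[OF this that]
    have "H (x, y) \<in> {0..1} \<inter> ball (of_int \<lfloor>K * x\<rfloor> / K) \<epsilon>" "g (H (x, y)) = q \<lfloor>K * y\<rfloor>"
      using S[OF x(1)] K by (simp_all add: H_def)
    then show "\<bar>H (x, y) - x\<bar> < 2/K" "H (x, y) \<in> {0..1}" "g (H (x, y)) = q \<lfloor>K * y\<rfloor>"
      using x(2,3) K by (auto simp: \<epsilon>_def dist_real_def)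
  qed
  have q_near: "\<bar>q \<lfloor>K * y\<rfloor> - y\<bar> < 2/K" if "y \<in> {0..1}" for y :: real
    using floor_scaled_bounds(2,3)[of K y] that K \<epsilon> by (auto simp: q_def \<epsilon>_def)
  have "H \<in> borel_measurable (borel_I \<Otimes>\<^sub>M borel_I)"
    unfolding H_def by (rule borel_measurable_floor_pair)
  moreover have "H \<in> space (borel_I \<Otimes>\<^sub>M borel_I) \<rightarrow> {0..1}"
    using H_in by (auto simp: space_pair_measure space_borel_I)
  ultimately have "H \<in> borel_I \<Otimes>\<^sub>M borel_I \<rightarrow>\<^sub>M restrict_space borel {0..1}"
    by (intro measurable_restrict_space2)
  then have "H \<in> borel_I \<Otimes>\<^sub>M borel_I \<rightarrow>\<^sub>M borel_I"
    unfolding borel_I_def[symmetric] .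
  then show thesis
    by (rule that) (auto simp: H_near gH q_near)
qed

lemma space_prob_measures_I: "\<mu> \<in> prob_measures_I \<Longrightarrow> space \<mu> = {0..1}"
  unfolding prob_measures_I_def using sets_eq_imp_space_eq space_borel_I by auto

lemma distr_in_prob_measures_I:
  "prob_space M \<Longrightarrow> F \<in> M \<rightarrow>\<^sub>M borel_I \<Longrightarrow> distr M borel_I F \<in> prob_measures_I"
  unfolding prob_measures_I_def by (auto intro: prob_space.prob_space_distr)

lemma continuous_on_I_borel_measurable:
  "continuous_on {0..1} \<phi> \<Longrightarrow> (\<phi> :: real \<Rightarrow> real) \<in> borel_measurable borel_I"
  unfolding borel_I_def by (rule borel_measurable_continuous_on_restrict)

lemma (in prob_space) distr_pair_snd:
  assumes "sigma_finite_measure N"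
  shows "distr (M \<Otimes>\<^sub>M N) N snd = N"
proof (intro measure_eqI)
  fix A assume "A \<in> sets (distr (M \<Otimes>\<^sub>M N) N snd)"
  then have A: "A \<in> sets N" by simp
  then have "emeasure (distr (M \<Otimes>\<^sub>M N) N snd) A = emeasure (M \<Otimes>\<^sub>M N) (space M \<times> A)"
    by (auto simp: emeasure_distr space_pair_measure dest: sets.sets_into_space
        intro!: arg_cong2[where f=emeasure])
  also have "\<dots> = emeasure N A"
    using sigma_finite_measure.emeasure_pair_measure_Times[OF assms sets.top[of M] A]
    by (simp add: emeasure_space_1)
  finally show "emeasure (distr (M \<Otimes>\<^sub>M N) N snd) A = emeasure N A" .
qed simp

lemma (in prob_space) abs_integral_diff_le:
  fixes f g :: "'a \<Rightarrow> real"
  assumes "integrable M f" "integrable M g" "\<And>z. z \<in> space M \<Longrightarrow> \<bar>f z - g z\<bar> \<le> c"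
  shows "\<bar>(\<integral>z. f z \<partial>M) - (\<integral>z. g z \<partial>M)\<bar> \<le> c"
proof -
  have "\<bar>(\<integral>z. f z \<partial>M) - (\<integral>z. g z \<partial>M)\<bar> = \<bar>\<integral>z. f z - g z \<partial>M\<bar>"
    using assms(1,2) by simp
  also have "\<dots> \<le> (\<integral>z. \<bar>f z - g z\<bar> \<partial>M)"
    using integral_norm_bound[of M "\<lambda>z. f z - g z"] by simp
  also have "\<dots> \<le> (\<integral>z. c \<partial>M)"
    using assms by (intro integral_mono) auto
  finally show ?thesis by (simp add: prob_space)
qed

lemma distr_in_weak_star_ball:
  assumes M: "prob_space M" and F: "F \<in> M \<rightarrow>\<^sub>M borel_I" and G: "G \<in> M \<rightarrow>\<^sub>M borel_I"
    and \<Phi>: "\<forall>\<phi>\<in>\<Phi>. continuous_on {0..1} \<phi>"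
    and close: "\<forall>\<phi>\<in>\<Phi>. \<forall>z\<in>space M. \<bar>\<phi> (F z) - \<phi> (G z)\<bar> \<le> e" and "e < r"
  shows "distr M borel_I F \<in> weak_star_ball \<Phi> r (distr M borel_I G)"
proof -
  interpret prob_space M by (fact M)
  have "\<bar>(\<integral>x. \<phi> x \<partial>distr M borel_I F) - (\<integral>x. \<phi> x \<partial>distr M borel_I G)\<bar> \<le> e" if "\<phi> \<in> \<Phi>" for \<phi>
  proof -
    have cont: "continuous_on {0..1} \<phi>" using \<Phi> that by blast
    then have \<phi>: "\<phi> \<in> borel_measurable borel_I" by (rule continuous_on_I_borel_measurable)
    obtain B where B: "\<forall>x\<in>{0..1}. \<bar>\<phi> x\<bar> \<le> B"
      using compact_imp_bounded[OF compact_continuous_image[OF cont compact_Icc]]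
      unfolding bounded_iff by auto
    have "integrable M (\<lambda>z. \<phi> (H z))" if "H \<in> M \<rightarrow>\<^sub>M borel_I" for H
      using measurable_space[OF that] B space_borel_I
      by (intro integrable_const_bound[where B=B] measurable_compose[OF that \<phi>]) auto
    with F G close that
    have "\<bar>(\<integral>z. \<phi> (F z) \<partial>M) - (\<integral>z. \<phi> (G z) \<partial>M)\<bar> \<le> e"
      by (intro abs_integral_diff_le) auto
    then show ?thesis using F G \<phi> by (simp add: integral_distr)
  qed
  with \<open>e < r\<close> show ?thesis
    unfolding weak_star_ball_def using distr_in_prob_measures_I[OF M F] by fastforce
qed

lemma continuous_self_map_measurable_I:
  assumes "continuous_on {0..1} g" "g ` {0..1} \<subseteq> {0..1}"
  shows "g \<in> borel_I \<rightarrow>\<^sub>M borel_I"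
proof -
  have "g \<in> borel_I \<rightarrow>\<^sub>M restrict_space borel {0..1}"
    using assms by (intro measurable_restrict_space2 continuous_on_I_borel_measurable)
      (auto simp: space_borel_I)
  then show ?thesis unfolding borel_I_def[symmetric] .
qed

lemma marginals_pair_prob_measures_I:
  assumes "\<mu> \<in> prob_measures_I" "\<nu> \<in> prob_measures_I"
  shows "distr (\<mu> \<Otimes>\<^sub>M \<nu>) borel_I fst = \<mu>" "distr (\<mu> \<Otimes>\<^sub>M \<nu>) borel_I snd = \<nu>"
proof -
  have prob: "prob_space \<mu>" "prob_space \<nu>" and sets: "sets \<mu> = sets borel_I" "sets \<nu> = sets borel_I"
    using assms by (auto simp: prob_measures_I_def)
  have "distr (\<mu> \<Otimes>\<^sub>M \<nu>) borel_I fst = distr (\<mu> \<Otimes>\<^sub>M \<nu>) \<mu> fst"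
    "distr (\<mu> \<Otimes>\<^sub>M \<nu>) borel_I snd = distr (\<mu> \<Otimes>\<^sub>M \<nu>) \<nu> snd"
    using sets by (auto intro: distr_cong)
  then show "distr (\<mu> \<Otimes>\<^sub>M \<nu>) borel_I fst = \<mu>" "distr (\<mu> \<Otimes>\<^sub>M \<nu>) borel_I snd = \<nu>"
    using prob_space.distr_pair_fst[OF prob(2), of \<mu>]
      prob_space.distr_pair_snd[OF prob(1) prob_space_imp_sigma_finite[OF prob(2)]]
    by simp_all
qed

lemma pushforward_of_coupling_in_weak_star_balls:
  assumes \<mu>: "\<mu> \<in> prob_measures_I" and \<nu>: "\<nu> \<in> prob_measures_I"
    and H: "H \<in> borel_I \<Otimes>\<^sub>M borel_I \<rightarrow>\<^sub>M borel_I" and G: "G \<in> borel_I \<rightarrow>\<^sub>M borel_I"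
    and \<Phi>: "\<forall>\<phi>\<in>\<Phi>. continuous_on {0..1} \<phi>"
    and unif: "\<forall>\<phi>\<in>\<Phi>. \<forall>x\<in>{0..1}. \<forall>y\<in>{0..1}. dist x y < \<delta> \<longrightarrow> dist (\<phi> x) (\<phi> y) < e"
    and "e < r"
    and near: "\<And>x y. x \<in> {0..1} \<Longrightarrow> y \<in> {0..1} \<Longrightarrow> dist (H (x, y)) x < \<delta> \<and> dist (G (H (x, y))) y < \<delta>"
  shows "distr (\<mu> \<Otimes>\<^sub>M \<nu>) borel_I H \<in> weak_star_ball \<Phi> r \<mu>"
    and "induced_map G (distr (\<mu> \<Otimes>\<^sub>M \<nu>) borel_I H) \<in> weak_star_ball \<Phi> r \<nu>"
proof -
  define M where "M = \<mu> \<Otimes>\<^sub>M \<nu>"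
  have prob: "prob_space \<mu>" "prob_space \<nu>" and sets: "sets \<mu> = sets borel_I" "sets \<nu> = sets borel_I"
    using \<mu> \<nu> by (auto simp: prob_measures_I_def)
  have M: "prob_space M" unfolding M_def by (rule prob_space_pair[OF prob])
  have sets_M: "sets M = sets (borel_I \<Otimes>\<^sub>M borel_I)"
    unfolding M_def by (rule sets_pair_measure_cong[OF sets])
  have space_M: "space M = {0..1} \<times> {0..1}"
    using \<mu> \<nu> by (simp add: M_def space_pair_measure space_prob_measures_I)
  have HM: "H \<in> M \<rightarrow>\<^sub>M borel_I" and GHM: "G \<circ> H \<in> M \<rightarrow>\<^sub>M borel_I"
    using H measurable_comp[OF H G] by (simp_all add: measurable_cong_sets[OF sets_M refl])
  have fst: "fst \<in> M \<rightarrow>\<^sub>M borel_I" and snd: "snd \<in> M \<rightarrow>\<^sub>M borel_I"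
    by (simp_all add: measurable_cong_sets[OF sets_M refl])
  have marginals: "distr M borel_I fst = \<mu>" "distr M borel_I snd = \<nu>"
    unfolding M_def by (rule marginals_pair_prob_measures_I[OF \<mu> \<nu>])+
  have "\<bar>\<phi> (H z) - \<phi> (fst z)\<bar> \<le> e" "\<bar>\<phi> ((G \<circ> H) z) - \<phi> (snd z)\<bar> \<le> e"
    if \<phi>: "\<phi> \<in> \<Phi>" and z: "z \<in> space M" for \<phi> z
  proof -
    obtain x y where xy: "z = (x, y)" "x \<in> {0..1}" "y \<in> {0..1}" using z space_M by auto
    have "H (x, y) \<in> {0..1}" "G (H (x, y)) \<in> {0..1}"
      using HM[THEN measurable_space] G[THEN measurable_space] z xy(1) space_borel_I by auto
    then have "dist (\<phi> (H (x, y))) (\<phi> x) < e" "dist (\<phi> (G (H (x, y)))) (\<phi> y) < e"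
      using unif \<phi> xy(2,3) near[OF xy(2,3)] by blast+
    then show "\<bar>\<phi> (H z) - \<phi> (fst z)\<bar> \<le> e" "\<bar>\<phi> ((G \<circ> H) z) - \<phi> (snd z)\<bar> \<le> e"
      by (simp_all add: xy(1) dist_real_def)
  qed
  then have "distr M borel_I H \<in> weak_star_ball \<Phi> r \<mu>"
    and "distr M borel_I (G \<circ> H) \<in> weak_star_ball \<Phi> r \<nu>"
    using distr_in_weak_star_ball[OF M _ _ \<Phi> _ \<open>e < r\<close>] HM GHM fst snd marginals
    by metis+
  moreover have "induced_map G (distr M borel_I H) = distr M borel_I (G \<circ> H)"
    unfolding induced_map_def by (rule distr_distr[OF G HM])
  ultimately show "distr (\<mu> \<Otimes>\<^sub>M \<nu>) borel_I H \<in> weak_star_ball \<Phi> r \<mu>"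
    and "induced_map G (distr (\<mu> \<Otimes>\<^sub>M \<nu>) borel_I H) \<in> weak_star_ball \<Phi> r \<nu>"
    by (simp_all add: M_def)
qed

context
  fixes f :: "nat \<Rightarrow> real \<Rightarrow> real"
  assumes cont: "\<And>n. continuous_on {0..1} (f n)"
    and self: "\<And>n. f n ` {0..1} \<subseteq> {0..1}"
    and wm3: "weakly_mixing_order (top_of_set {0..1}) (iter_comp f) 3"
begin

lemma stretching_iterate:
  assumes W: "openin (top_of_set {0..1}) W" "W \<noteq> {}"
    and U: "openin (top_of_set {0..1}) U" "U \<noteq> {}"
    and V: "openin (top_of_set {0..1}) V" "V \<noteq> {}"
    and \<epsilon>: "0 < \<epsilon>" "\<epsilon> < 1/2"
  obtains n where "N < n" "{\<epsilon>..1-\<epsilon>} \<subseteq> iter_comp f n ` W" "iter_comp f n ` U \<inter> V \<noteq> {}"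
proof -
  obtain x where x: "x \<in> W" using W(2) by blast
  then have xI: "x \<in> {0..1}" using W(1) openin_imp_subset by blast
  obtain \<delta>0 where \<delta>0: "0 < \<delta>0" "\<forall>y\<in>{0..1}. dist y x < \<delta>0 \<longrightarrow> y \<in> W"
    using W(1) x unfolding openin_euclidean_subtopology_iff by blast
  obtain \<delta>1 where \<delta>1: "0 < \<delta>1" "\<forall>g\<in>iter_comp f ` {..N}. \<forall>y\<in>{0..1}. \<forall>z\<in>{0..1}.
      dist y z < \<delta>1 \<longrightarrow> dist (g y) (g z) < 1/2 - \<epsilon>"
    using uniformly_continuous_on_finite_family[of "{0..1}" "iter_comp f ` {..N}" "1/2 - \<epsilon>"]
      iter_comp_continuous_on[OF cont self] \<epsilon> by auto
  define J where "J = {0..1} \<inter> ball x (min \<delta>0 \<delta>1)"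
  have J_open: "openin (top_of_set {0..1}) J" unfolding J_def by (rule openin_open_Int) simp
  have "x \<in> J" using \<delta>0 \<delta>1 xI by (simp add: J_def)
  have JW: "J \<subseteq> W" using \<delta>0 by (auto simp: J_def dist_commute)
  have near_x: "y \<in> {0..1} \<and> dist y x < \<delta>1" if "y \<in> J" for y
    using that by (auto simp: J_def dist_commute)
  have left: "openin (top_of_set {0..1}) ({0..1} \<inter> {..<\<epsilon>})" "0 \<in> {0..1} \<inter> {..<\<epsilon>}"
    using \<epsilon> by (auto intro: openin_open_Int)
  have right: "openin (top_of_set {0..1}) ({0..1} \<inter> {1-\<epsilon><..})" "1 \<in> {0..1} \<inter> {1-\<epsilon><..}"
    using \<epsilon> by (auto intro: openin_open_Int)
  obtain n where "1 \<le> n" and "iter_comp f n ` J \<inter> ({0..1} \<inter> {..<\<epsilon>}) \<noteq> {}"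
    and "iter_comp f n ` J \<inter> ({0..1} \<inter> {1-\<epsilon><..}) \<noteq> {}" and hit: "iter_comp f n ` U \<inter> V \<noteq> {}"
    by (rule weakly_mixing_order_3D[OF wm3 J_open _ J_open _ U left(1) _ right(1) _ V])
      (use \<open>x \<in> J\<close> left(2) right(2) in blast)+
  then obtain a b where a: "a \<in> J" "iter_comp f n a < \<epsilon>" and b: "b \<in> J" "iter_comp f n b > 1 - \<epsilon>"
    by blast
  \<comment> \<open>\<open>g\<^sub>0, \<dots>, g\<^sub>N\<close> move \<open>J\<close> by less than \<open>1/2 - \<epsilon>\<close>, so none of them can send \<open>a\<close> and \<open>b\<close> that far apart.\<close>
  have "N < n"
  proof (rule ccontr)
    assume "\<not> N < n"
    then have "iter_comp f n \<in> iter_comp f ` {..N}" by simp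
    then have "dist (iter_comp f n a) (iter_comp f n x) < 1/2 - \<epsilon>"
      "dist (iter_comp f n b) (iter_comp f n x) < 1/2 - \<epsilon>"
      using \<delta>1(2) near_x[OF a(1)] near_x[OF b(1)] xI by blast+
    with a(2) b(2) show False by (simp add: dist_real_def)
  qed
  moreover have "{\<epsilon>..1-\<epsilon>} \<subseteq> iter_comp f n ` J"
  proof (rule Icc_subset_image_connected[OF _ _ a(1) b(1)])
    show "connected J" unfolding J_def by (intro convex_connected convex_Int) simp_all
    show "continuous_on J (iter_comp f n)"
      by (rule continuous_on_subset[OF iter_comp_continuous_on[OF cont self]]) (auto simp: J_def)
  qed (use a(2) b(2) in auto)
  with JW have "{\<epsilon>..1-\<epsilon>} \<subseteq> iter_comp f n ` W" by blast
  ultimately show thesis using hit by (rule that)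
qed

lemma shrink_into_iterate_image:
  assumes W: "openin (top_of_set {0..1}) W" "W \<noteq> {}"
    and U: "openin (top_of_set {0..1}) U" "U \<noteq> {}"
  obtains W' n where "openin (top_of_set {0..1}) W'" "W' \<noteq> {}" "W' \<subseteq> W" "N \<le> n"
    "iter_comp f n ` W' \<subseteq> iter_comp f n ` U"
proof -
  define V where "V = {0..1} \<inter> {1/4<..<3/4::real}"
  have "1/2 \<in> V" by (simp add: V_def)
  then have V: "openin (top_of_set {0..1}) V" "V \<noteq> {}"
    by (auto simp only: V_def intro: openin_open_Int open_greaterThanLessThan)
  \<comment> \<open>Stretching with the roles of \<open>W\<close> and \<open>U\<close> exchanged; \<open>W'\<close> is the part of \<open>W\<close> landing in \<open>V\<close>.\<close>
  obtain n where n: "N < n" "{1/4..1-1/4} \<subseteq> iter_comp f n ` U" "iter_comp f n ` W \<inter> V \<noteq> {}"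
    by (rule stretching_iterate[OF U W V, of "1/4" N]) auto
  define W' where "W' = W \<inter> ({0..1} \<inter> iter_comp f n -` {1/4<..<3/4})"
  show thesis
  proof (rule that[of W' n])
    show "openin (top_of_set {0..1}) W'" unfolding W'_def
      by (intro openin_Int W(1) continuous_openin_preimage_gen iter_comp_continuous_on[OF cont self]) simp
    obtain w where "w \<in> W" "iter_comp f n w \<in> V" using n(3) by blast
    moreover have "w \<in> {0..1}" using \<open>w \<in> W\<close> W(1) openin_imp_subset by blast
    ultimately show "W' \<noteq> {}" by (auto simp: W'_def V_def)
    have "iter_comp f n ` W' \<subseteq> {1/4..1-1/4}" by (auto simp: W'_def)
    with n(2) show "iter_comp f n ` W' \<subseteq> iter_comp f n ` U" by blast
  qed (use n(1) in \<open>auto simp: W'_def\<close>)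
qed

lemma common_refinement:
  assumes "finite \<U>" "\<forall>U\<in>\<U>. openin (top_of_set {0..1}) U \<and> U \<noteq> {}"
  shows "\<exists>W n0. openin (top_of_set {0..1}) W \<and> W \<noteq> {} \<and>
           (\<forall>U\<in>\<U>. \<forall>n\<ge>n0. iter_comp f n ` W \<subseteq> iter_comp f n ` U)"
  using assms
proof (induction \<U> rule: finite_induct)
  case empty
  show ?case by (intro exI[of _ "{0..1::real}"] exI[of _ 0]) auto
next
  case (insert U \<U>)
  then obtain W n0 where W: "openin (top_of_set {0..1}) W" "W \<noteq> {}"
    "\<forall>U\<in>\<U>. \<forall>n\<ge>n0. iter_comp f n ` W \<subseteq> iter_comp f n ` U"
    by auto
  have "openin (top_of_set {0..1}) U" "U \<noteq> {}" using insert.prems by auto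
  then obtain W' n1 where W': "openin (top_of_set {0..1}) W'" "W' \<noteq> {}" "W' \<subseteq> W" "n0 \<le> n1"
    "iter_comp f n1 ` W' \<subseteq> iter_comp f n1 ` U"
    using shrink_into_iterate_image[OF W(1,2)] by metis
  have "iter_comp f n ` W' \<subseteq> iter_comp f n ` V" if "V \<in> insert U \<U>" "n1 \<le> n" for V n
  proof (cases "V = U")
    case True
    with iter_comp_image_mono[OF W'(5) that(2)] show ?thesis by simp
  next
    case False
    with that W(3) W'(4) have "iter_comp f n ` W \<subseteq> iter_comp f n ` V" by auto
    with W'(3) show ?thesis by blast
  qed
  with W'(1,2) show ?case by blast
qed

lemma simultaneous_stretching:
  assumes "finite \<U>" "\<forall>U\<in>\<U>. openin (top_of_set {0..1}) U \<and> U \<noteq> {}"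
    and "0 < \<epsilon>" "\<epsilon> < 1/2"
  obtains n where "1 \<le> n" "\<forall>U\<in>\<U>. {\<epsilon>..1-\<epsilon>} \<subseteq> iter_comp f n ` U"
proof -
  obtain W n0 where W: "openin (top_of_set {0..1}) W" "W \<noteq> {}"
    "\<forall>U\<in>\<U>. \<forall>n\<ge>n0. iter_comp f n ` W \<subseteq> iter_comp f n ` U"
    using common_refinement[OF assms(1,2)] by blast
  have I: "openin (top_of_set {0..1}) {0..1::real}" "{0..1::real} \<noteq> {}" by auto
  obtain n where n: "n0 < n" "{\<epsilon>..1-\<epsilon>} \<subseteq> iter_comp f n ` W"
    using stretching_iterate[OF W(1,2) I I assms(3,4)] by metis
  have "{\<epsilon>..1-\<epsilon>} \<subseteq> iter_comp f n ` U" if "U \<in> \<U>" for U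
  proof -
    have "iter_comp f n ` W \<subseteq> iter_comp f n ` U" using W(3) that n(1) by simp
    with n(2) show ?thesis by blast
  qed
  with n(1) show thesis by (intro that[of n]) auto
qed

lemma iterate_has_measurable_approximate_section:
  assumes "0 < \<delta>"
  obtains n H where "1 \<le> n" "H \<in> borel_I \<Otimes>\<^sub>M borel_I \<rightarrow>\<^sub>M borel_I"
    "\<And>x y. x \<in> {0..1} \<Longrightarrow> y \<in> {0..1} \<Longrightarrow> dist (H (x, y)) x < \<delta> \<and> dist (iter_comp f n (H (x, y))) y < \<delta>"
proof -
  obtain k :: nat where "2 / \<delta> < k" using reals_Archimedean2 by blast
  define K where "K = k + 3"
  have K: "3 \<le> K" "2 / K < \<delta>"
    using \<open>2 / \<delta> < k\<close> assms by (auto simp: K_def field_simps)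
  define \<U> where "\<U> = (\<lambda>i. {0..1} \<inter> ball (of_int i / K) (1/K)) ` {0..int K}"
  have \<U>: "\<forall>U\<in>\<U>. openin (top_of_set {0..1}) U \<and> U \<noteq> {}"
  proof (intro ballI conjI)
    fix U assume "U \<in> \<U>"
    then obtain i where i: "i \<in> {0..int K}" "U = {0..1} \<inter> ball (of_int i / K) (1/K)"
      by (auto simp: \<U>_def)
    show "openin (top_of_set {0..1}) U" unfolding i(2) by (rule openin_open_Int) simp
    have "of_int i / K \<in> U" using i K by (simp add: divide_le_eq_1)
    then show "U \<noteq> {}" by blast
  qed
  have "finite \<U>" unfolding \<U>_def by simp
  moreover have "0 < 1 / real K" "1 / real K < 1/2" using K(1) by simp_all
  ultimately obtain n where "1 \<le> n" "\<forall>U\<in>\<U>. {1/K..1-1/K} \<subseteq> iter_comp f n ` U"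
    by (rule simultaneous_stretching[OF _ \<U>])
  then have cover: "{1/K..1-1/K} \<subseteq> iter_comp f n ` ({0..1} \<inter> ball (of_int i / K) (1/K))"
    if "i \<in> {0..int K}" for i
    using that unfolding \<U>_def by blast
  have "2 \<le> K" using K(1) by simp
  obtain H where H: "H \<in> borel_I \<Otimes>\<^sub>M borel_I \<rightarrow>\<^sub>M borel_I"
    and H_near: "\<And>x y. x \<in> {0..1} \<Longrightarrow> y \<in> {0..1} \<Longrightarrow> \<bar>H (x, y) - x\<bar> < 2/K"
    and gH_near: "\<And>x y. x \<in> {0..1} \<Longrightarrow> y \<in> {0..1} \<Longrightarrow> \<bar>iter_comp f n (H (x, y)) - y\<bar> < 2/K"
    using approximate_section_on_grid[OF \<open>2 \<le> K\<close> cover] by blast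
  have "dist (H (x, y)) x < \<delta> \<and> dist (iter_comp f n (H (x, y))) y < \<delta>"
    if "x \<in> {0..1}" "y \<in> {0..1}" for x y
    using H_near[OF that] gH_near[OF that] K(2) by (simp add: dist_real_def)
  with \<open>1 \<le> n\<close> H show thesis by (rule that)
qed

end

theorem mainTheorem5:
  fixes f :: "nat \<Rightarrow> real \<Rightarrow> real"
  assumes cont: "\<And>n. continuous_on {0..1} (f n)"
    and self: "\<And>n. f n ` {0..1} \<subseteq> {0..1}"
    and wm3: "weakly_mixing_order (top_of_set {0..1}) (iter_comp f) 3"
  shows "weakly_mixing_all_orders weak_star_topology_I (\<lambda>n. induced_map (iter_comp f n))"
  unfolding weakly_mixing_all_orders_def weakly_mixing_order_def
proof (intro allI impI)
  fix m :: nat and U V :: "nat \<Rightarrow> real measure set"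
  assume "\<forall>i<m. openin weak_star_topology_I (U i) \<and> U i \<noteq> {} \<and> openin weak_star_topology_I (V i) \<and> V i \<noteq> {}"
  \<comment> \<open>Index \<open>Inl i\<close> stands for \<open>U i\<close> and \<open>Inr i\<close> for \<open>V i\<close>.\<close>
  then have "\<forall>k\<in>{..<m} <+> {..<m}. openin weak_star_topology_I (case_sum U V k) \<and> case_sum U V k \<noteq> {}"
    by auto
  then obtain \<mu> \<Phi> r where \<mu>: "\<forall>k\<in>{..<m} <+> {..<m}. \<mu> k \<in> prob_measures_I"
    and \<Phi>: "finite \<Phi>" "\<forall>\<phi>\<in>\<Phi>. continuous_on {0..1} \<phi>" "0 < r"
    and balls: "\<forall>k\<in>{..<m} <+> {..<m}. weak_star_ball \<Phi> r (\<mu> k) \<subseteq> case_sum U V k"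
    by (rule weak_star_open_family_common_ball[rotated]) auto
  obtain \<delta> where \<delta>: "0 < \<delta>" "\<forall>\<phi>\<in>\<Phi>. \<forall>x\<in>{0..1}. \<forall>y\<in>{0..1}. dist x y < \<delta> \<longrightarrow> dist (\<phi> x) (\<phi> y) < r/2"
    using uniformly_continuous_on_finite_family[OF compact_Icc \<Phi>(1,2)] \<Phi>(3) by (metis half_gt_zero)
  obtain n H where "1 \<le> n" and H: "H \<in> borel_I \<Otimes>\<^sub>M borel_I \<rightarrow>\<^sub>M borel_I"
    and near: "\<And>x y. x \<in> {0..1} \<Longrightarrow> y \<in> {0..1} \<Longrightarrow> dist (H (x, y)) x < \<delta> \<and> dist (iter_comp f n (H (x, y))) y < \<delta>"
    using iterate_has_measurable_approximate_section[OF cont self wm3 \<delta>(1)] by metis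
  have G: "iter_comp f n \<in> borel_I \<rightarrow>\<^sub>M borel_I"
    by (intro continuous_self_map_measurable_I iter_comp_continuous_on iter_comp_image_subset cont self)
  have "distr (\<mu> (Inl i) \<Otimes>\<^sub>M \<mu> (Inr i)) borel_I H \<in> U i \<and>
        induced_map (iter_comp f n) (distr (\<mu> (Inl i) \<Otimes>\<^sub>M \<mu> (Inr i)) borel_I H) \<in> V i" if "i < m" for i
    using pushforward_of_coupling_in_weak_star_balls[OF _ _ H G \<Phi>(2) \<delta>(2) _ near, of "\<mu> (Inl i)" "\<mu> (Inr i)" r]
      \<mu> balls that \<Phi>(3) by fastforce
  with \<open>1 \<le> n\<close> show "\<exists>n\<ge>1. \<forall>i<m. (\<lambda>n. induced_map (iter_comp f n)) n ` U i \<inter> V i \<noteq> {}" by blast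
qed

end
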